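(* For $X>0$ let $N^*(X)$ be the number of finite tuples $(d_1,\dots,d_j)$ (with $j\ge1$ arbitrary, depending on the tuple) of natural numbers $d_k\ge1$ such that $\prod_{k=1}^j(3d_k)\le X$. Then $N^*(X)=0$ for $X<3$, and for every $X>0$, $$N^*(X)\le \Big(\frac X3\Big)^{5/3}.$$ *)

theory Defs
  imports Complex_Main
begin

definition Nstar_set :: "real \<Rightarrow> nat list set" where
  "Nstar_set X = {ds. ds \<noteq> [] \<and> (\<forall>d\<in>set ds. d \<ge> 1) \<and>
                       real (\<Prod>d\<leftarrow>ds. 3 * d) \<le> X}"

definition Nstar :: "real \<Rightarrow> nat" where
  "Nstar X = card (Nstar_set X)"

end

theory Submission
  imports Defs
begin

(* Splitting off the first entry d of a tuple gives the recurrence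
   N*(X) <= floor(X/3) + sum_{d <= X/3} N*(X/(3d)).  Inductively N*(X/(3d)) <= (X/9)^(5/3) d^(-5/3),
   and by the mean value theorem d^(-5/3) <= (3/2)((d-1)^(-2/3) - d^(-2/3)) for d >= 2, so
   sum_d d^(-5/3) telescopes to at most 1 + 3/2.  Writing Y = X/3, the bound closes once
   Y + (5/2)(Y/3)^(5/3) <= Y^(5/3), which holds for Y >= 3 because 3^(5/3) >= 5 and
   Y^(2/3) >= 2; for 1 <= Y < 3 all the subproblems are empty. *)

lemma inverse_powr_Suc_le_diff:
  fixes a x :: real
  assumes a: "a > 0" and x: "x > 0"
  shows "1 / (x + 1) powr (a + 1) \<le> (1 / x powr a - 1 / (x + 1) powr a) / a"
proof -
  have "DERIV (\<lambda>t. t powr (- a)) t :> - a * t powr (- a - 1)" if "x \<le> t" for t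
    using x that has_real_derivative_powr[of t "- a"] by simp
  then obtain z where z: "x < z" "z < x + 1"
    and mvt: "(x + 1) powr (- a) - x powr (- a) = (x + 1 - x) * (- a * z powr (- a - 1))"
    using MVT2[of x "x + 1" "\<lambda>t. t powr (- a)" "\<lambda>t. - a * t powr (- a - 1)"] by auto
  have "(x + 1) powr (- a - 1) \<le> z powr (- a - 1)"
    using a x z by (intro powr_mono2') auto
  then have "a * (x + 1) powr (- a - 1) \<le> a * z powr (- a - 1)"
    using a by (intro mult_left_mono) auto
  with mvt have "a * (x + 1) powr (- a - 1) \<le> x powr (- a) - (x + 1) powr (- a)"
    by simp
  moreover have "(x + 1) powr (- a - 1) = 1 / (x + 1) powr (a + 1)"
    using powr_minus_divide[of "x + 1" "a + 1"] by simp
  ultimately show ?thesis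
    using a by (simp add: powr_minus_divide field_simps)
qed

lemma sum_inverse_powr_le:
  fixes a :: real
  assumes a: "a > 0"
  shows "(\<Sum>d = 1..n. 1 / real d powr (a + 1)) \<le> 1 + 1 / a"
proof (cases "n = 0")
  case False
  then have "n \<ge> 1" by simp
  then have "(\<Sum>d = 1..n. 1 / real d powr (a + 1)) \<le> 1 + (1 - 1 / real n powr a) / a"
  proof (induction n rule: dec_induct)
    case (step n)
    then show ?case
      using inverse_powr_Suc_le_diff[OF a, of "real n"] by (simp add: add.commute diff_divide_distrib)
  qed simp
  moreover have "(1 - 1 / real n powr a) / a \<le> 1 / a"
    using a by (intro divide_right_mono) auto
  ultimately show ?thesis by linarith
qed (use a in simp)

lemma le_powr_of_power_le:
  fixes x y :: real
  assumes "0 < x" "0 < y" "x ^ n \<le> y ^ m" "n > 0"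
  shows "x \<le> y powr (m / n)"
proof -
  have "x = (x ^ n) powr (1 / n)"
    using assms by (simp add: powr_realpow[symmetric] powr_powr)
  also have "\<dots> \<le> (y ^ m) powr (1 / n)"
    using assms by (intro powr_mono2) auto
  also have "\<dots> = y powr (m / n)"
    using assms by (simp add: powr_realpow[symmetric] powr_powr)
  finally show ?thesis .
qed

lemma add_five_halves_powr_five_thirds_le:
  fixes Y :: real
  assumes "Y \<ge> 3"
  shows "Y + 5 / 2 * (Y / 3) powr (5 / 3) \<le> Y powr (5 / 3)"
proof -
  have "5 \<le> (3::real) powr (5 / 3)"
    using le_powr_of_power_le[where x=5 and n=3 and y=3 and m=5] by simp
  then have "5 / 2 * (Y / 3) powr (5 / 3) \<le> Y powr (5 / 3) / 2"
    using assms by (simp add: powr_divide field_simps)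
  moreover have "2 \<le> Y powr (2 / 3)"
    using le_powr_of_power_le[where x=2 and n=3 and y=Y and m=2] assms power_mono[of "3::real" Y 2] by simp
  then have "2 * Y \<le> Y powr (5 / 3)"
    using assms powr_add[of Y 1 "2 / 3"] by simp
  ultimately show ?thesis by linarith
qed

lemma prod_list_times_three_ge:
  "(\<forall>d\<in>set ds. d \<ge> 1) \<Longrightarrow> 3 ^ length ds \<le> (\<Prod>d\<leftarrow>ds. 3 * d :: nat)"
proof (induction ds)
  case (Cons d ds)
  then show ?case
    using mult_le_mono[of 1 d "3 ^ length ds" "\<Prod>d\<leftarrow>ds. 3 * d"] by simp
qed simp

lemma Nstar_set_eq_empty:
  assumes "X < 3"
  shows "Nstar_set X = {}"
proof -
  have "X < real (\<Prod>d\<leftarrow>ds. 3 * d)" if "ds \<noteq> []" "\<forall>d\<in>set ds. d \<ge> 1" for ds :: "nat list"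
  proof -
    have "3 \<le> (3::nat) ^ length ds"
      using that(1) by (cases ds) auto
    also have "\<dots> \<le> (\<Prod>d\<leftarrow>ds. 3 * d)"
      using prod_list_times_three_ge[OF that(2)] .
    finally have "3 \<le> (\<Prod>d\<leftarrow>ds. 3 * d)" .
    with assms show ?thesis by simp
  qed
  then show ?thesis
    unfolding Nstar_set_def by (auto simp: not_le[symmetric])
qed

lemma Nstar_set_subset_Cons:
  "Nstar_set X \<subseteq> (\<lambda>d. [d]) ` {1..nat \<lfloor>X / 3\<rfloor>} \<union>
     (\<Union>d\<in>{1..nat \<lfloor>X / 3\<rfloor>}. Cons d ` Nstar_set (X / (3 * real d)))"
proof
  fix ds assume "ds \<in> Nstar_set X"
  then obtain d rest where ds: "ds = d # rest" and d: "d \<ge> 1" and rest: "\<forall>d\<in>set rest. d \<ge> 1"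
    and prod: "3 * real d * real (\<Prod>d\<leftarrow>rest. 3 * d) \<le> X"
    unfolding Nstar_set_def by (cases ds) auto
  have "1 \<le> (\<Prod>d\<leftarrow>rest. 3 * d)"
    using prod_list_times_three_ge[OF rest] le_trans[OF one_le_power[of 3 "length rest"]] by simp
  then have "3 * real d * 1 \<le> 3 * real d * real (\<Prod>d\<leftarrow>rest. 3 * d)"
    by (intro mult_left_mono) auto
  with prod have "3 * real d \<le> X"
    by simp
  then have "d \<in> {1..nat \<lfloor>X / 3\<rfloor>}"
    using d by (simp add: le_nat_floor le_floor_iff)
  moreover have "rest = [] \<or> rest \<in> Nstar_set (X / (3 * real d))"
    using rest prod d by (auto simp: Nstar_set_def field_simps)
  ultimately show "ds \<in> (\<lambda>d. [d]) ` {1..nat \<lfloor>X / 3\<rfloor>} \<union>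
     (\<Union>d\<in>{1..nat \<lfloor>X / 3\<rfloor>}. Cons d ` Nstar_set (X / (3 * real d)))"
    using ds by auto
qed

lemma Nstar_set_recurrence:
  assumes fin: "\<And>d. d \<ge> 1 \<Longrightarrow> finite (Nstar_set (X / (3 * real d)))"
  shows "finite (Nstar_set X)"
    and "card (Nstar_set X) \<le>
           nat \<lfloor>X / 3\<rfloor> + (\<Sum>d = 1..nat \<lfloor>X / 3\<rfloor>. card (Nstar_set (X / (3 * real d))))"
proof -
  let ?m = "nat \<lfloor>X / 3\<rfloor>"
  let ?U = "(\<lambda>d. [d]) ` {1..?m} \<union> (\<Union>d\<in>{1..?m}. Cons d ` Nstar_set (X / (3 * real d)))"
  have "finite ?U" using fin by auto
  then show "finite (Nstar_set X)"
    using Nstar_set_subset_Cons by (rule finite_subset[rotated])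
  have "card (Nstar_set X) \<le> card ?U"
    using \<open>finite ?U\<close> Nstar_set_subset_Cons by (rule card_mono)
  also have "\<dots> \<le> card ((\<lambda>d. [d]) ` {1..?m}) + card (\<Union>d\<in>{1..?m}. Cons d ` Nstar_set (X / (3 * real d)))"
    by (rule card_Un_le)
  also have "\<dots> \<le> ?m + (\<Sum>d = 1..?m. card (Cons d ` Nstar_set (X / (3 * real d))))"
    using card_image_le[of "{1..?m}" "\<lambda>d. [d]"] card_UN_le[of "{1..?m}"] by (intro add_mono) auto
  also have "\<dots> = ?m + (\<Sum>d = 1..?m. card (Nstar_set (X / (3 * real d))))"
    by (simp add: card_image)
  finally show "card (Nstar_set X) \<le> ?m + (\<Sum>d = 1..?m. card (Nstar_set (X / (3 * real d))))" .
qed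

lemma Nstar_set_finite_card_le_step:
  assumes X: "X \<ge> 3"
    and sub: "\<And>d. d \<ge> 1 \<Longrightarrow> finite (Nstar_set (X / (3 * real d))) \<and>
                 real (card (Nstar_set (X / (3 * real d)))) \<le> (X / (3 * real d) / 3) powr (5 / 3)"
  shows "finite (Nstar_set X) \<and> real (card (Nstar_set X)) \<le> (X / 3) powr (5 / 3)"
proof -
  define Y where "Y = X / 3"
  define m where "m = nat \<lfloor>Y\<rfloor>"
  have "Y \<ge> 1" and "real m \<le> Y"
    using X of_nat_floor[of Y] by (auto simp: Y_def m_def)
  have fin: "finite (Nstar_set X)"
    by (rule Nstar_set_recurrence(1)) (use sub in simp)
  have "card (Nstar_set X) \<le> m + (\<Sum>d = 1..m. card (Nstar_set (X / (3 * real d))))"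
    unfolding m_def Y_def by (rule Nstar_set_recurrence(2)) (use sub in simp)
  then have rec: "real (card (Nstar_set X)) \<le> real m + (\<Sum>d = 1..m. real (card (Nstar_set (X / (3 * real d)))))"
    by (metis of_nat_add of_nat_mono of_nat_sum)
  have "real (card (Nstar_set X)) \<le> Y powr (5 / 3)"
  proof (cases "Y < 3")
    case True
    have "Nstar_set (X / (3 * real d)) = {}" if "d \<ge> 1" for d
      using True X that by (intro Nstar_set_eq_empty) (simp add: Y_def field_simps mult_left_mono)
    then have "real (card (Nstar_set X)) \<le> Y"
      using rec \<open>real m \<le> Y\<close> by simp
    also have "\<dots> \<le> Y powr (5 / 3)"
      using powr_mono[of 1 "5 / 3" Y] \<open>Y \<ge> 1\<close> by simp
    finally show ?thesis .
  next
    case False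
    have "(X / (3 * real d) / 3) powr (5 / 3) = (Y / 3) powr (5 / 3) * (1 / real d powr (5 / 3))" for d
    proof -
      have "X / (3 * real d) / 3 = Y / 3 / real d"
        by (simp add: Y_def)
      then show ?thesis
        by (simp only: powr_divide) simp
    qed
    then have "(\<Sum>d = 1..m. real (card (Nstar_set (X / (3 * real d)))))
        \<le> (\<Sum>d = 1..m. (Y / 3) powr (5 / 3) * (1 / real d powr (5 / 3)))"
      using sub by (intro sum_mono) auto
    also have "\<dots> = (Y / 3) powr (5 / 3) * (\<Sum>d = 1..m. 1 / real d powr (5 / 3))"
      by (rule sum_distrib_left[symmetric])
    also have "\<dots> \<le> (Y / 3) powr (5 / 3) * (5 / 2)"
      using sum_inverse_powr_le[of "2 / 3" m] by (intro mult_left_mono) simp_all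
    finally show ?thesis
      using rec \<open>real m \<le> Y\<close> add_five_halves_powr_five_thirds_le[of Y] False by simp
  qed
  with fin show ?thesis by (simp add: Y_def)
qed

lemma Nstar_set_finite_card_le:
  assumes "X < 3 ^ n"
  shows "finite (Nstar_set X) \<and> real (card (Nstar_set X)) \<le> (X / 3) powr (5 / 3)"
  using assms
proof (induction n arbitrary: X)
  case 0
  then show ?case using Nstar_set_eq_empty by simp
next
  case (Suc n)
  show ?case
  proof (cases "X < 3")
    case True
    then show ?thesis using Nstar_set_eq_empty by simp
  next
    case False
    have sub_lt: "X / (3 * real d) < 3 ^ n" if "d \<ge> 1" for d
    proof -
      have "X / (3 * real d) \<le> X / 3"
        using False that by (simp add: field_simps mult_left_mono)
      with Suc.prems show ?thesis by simp
    qed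
    show ?thesis
    proof (rule Nstar_set_finite_card_le_step)
      show "X \<ge> 3" using False by simp
    qed (rule Suc.IH[OF sub_lt])
  qed
qed

theorem lemma3:
  fixes X :: real
  assumes "X > 0"
  shows "finite (Nstar_set X) \<and> (X < 3 \<longrightarrow> Nstar X = 0) \<and>
         real (Nstar X) \<le> (X / 3) powr (5 / 3)"
proof -
  obtain n where "X < 3 ^ n"
    using real_arch_pow[of 3 X] by auto
  from Nstar_set_finite_card_le[OF this] show ?thesis
    using Nstar_set_eq_empty unfolding Nstar_def by simp
qed

end
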